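(* Suppose that, for each $x$, the function $p(x\mid\cdot)$ is an element of an RKHS $\mathbb H_{K_{\mathcal F}}$, and $h\in\mathcal H$ satisfies $|h(x)|\le\kappa(x)\|h\|_{\mathcal H}$ for some $\kappa:\mathcal X\to\mathbb R$. If $L:=\int\kappa(x)\,\|p(x\mid\cdot)\|_{K_{\mathcal F}}\,dx<\infty$, then $Th\in\mathbb H_{K_{\mathcal F}}$ with $\|Th\|_{K_{\mathcal F}}\le L\|h\|_{\mathcal H}$.
   Context: $p(x\mid z)$ is the conditional density of $x$ given $z$ and $(Th)(z)=\mathbb E[h(x)\mid z]=\int h(x)p(x\mid z)dx$. $\mathcal H$ is a normed function class on $\mathcal X$ with norm $\|\cdot\|_{\mathcal H}$; $\|\cdot\|_{K_{\mathcal F}}$ is the norm of the RKHS $\mathbb H_{K_{\mathcal F}}$ of functions on $\mathcal Z$ with kernel $K_{\mathcal F}$. *)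

theory Defs
  imports "HOL-Analysis.Analysis"
begin

(* linearity of a map into real-valued functions (function spaces are not a vector type class) *)
definition linear_to_funs :: "('a::real_vector \<Rightarrow> 'x \<Rightarrow> real) \<Rightarrow> bool" where
  "linear_to_funs E \<longleftrightarrow> (\<forall>f g x. E (f + g) x = E f x + E g x) \<and> (\<forall>c f x. E (c *\<^sub>R f) x = c * E f x)"

(* An RKHS with kernel K on 'z is modelled as a real Hilbert space 'h together with an
   injective linear map emb :: 'h => ('z => real) identifying its elements with functions,
   such that every section K(.,z) belongs to the space and has the reproducing property
   g(z) = <g, K(.,z)>.  This determines H_K uniquely (up to the identification). *)
definition is_rkhs :: "('z \<Rightarrow> 'z \<Rightarrow> real) \<Rightarrow> ('h::{real_inner,complete_space} \<Rightarrow> 'z \<Rightarrow> real) \<Rightarrow> bool" where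
  "is_rkhs K emb \<longleftrightarrow> linear_to_funs emb \<and> inj emb \<and>
     (\<forall>z. \<exists>kz. emb kz = (\<lambda>w. K w z) \<and> (\<forall>g. emb g z = inner g kz))"

(* membership g \<in> H_K is  g \<in> range emb ; the RKHS norm of a member: *)
definition rkhs_norm :: "('h::real_normed_vector \<Rightarrow> 'z \<Rightarrow> real) \<Rightarrow> ('z \<Rightarrow> real) \<Rightarrow> real" where
  "rkhs_norm emb g = norm (inv emb g)"

definition is_normed_fun_class :: "('a::real_normed_vector \<Rightarrow> 'x \<Rightarrow> real) \<Rightarrow> bool" where
  "is_normed_fun_class E \<longleftrightarrow> linear_to_funs E \<and> inj E"

end

theory Submission
  imports Defs
begin

(* Let q_x be the element of H_K representing p(x|.) and k_z the kernel section at z, so that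
   p(x|z) = <q_x, k_z>.  The functional f |-> integral of h(x) <q_x, f> dx is linear and bounded
   by L ||h|| ||f||, hence represented by some g with ||g|| <= L ||h||, and testing against k_z
   shows that g is Th.  The functional is only defined on the subspace of those f for which
   x |-> <q_x, f> is measurable, so the representer is obtained directly: a minimising sequence
   of the energy ||f||^2/2 - phi f is Cauchy by the parallelogram law, and its limit represents
   phi by the first-order condition. *)

lemma quadratic_nonneg_imp_linear_coeff_zero:
  fixes a d :: real
  assumes "\<And>t. 0 \<le> t * d + t\<^sup>2 * a"
  shows "d = 0"
proof (rule ccontr)
  assume "d \<noteq> 0"
  define t where "t = - d / (\<bar>a\<bar> + 1)"
  have "t \<noteq> 0" using \<open>d \<noteq> 0\<close> unfolding t_def by (simp add: add_pos_nonneg)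
  have "d = - t * (\<bar>a\<bar> + 1)" unfolding t_def by (simp add: add_pos_nonneg)
  have "t\<^sup>2 * a \<le> t\<^sup>2 * \<bar>a\<bar>" by (rule mult_left_mono) simp_all
  then have "t * d + t\<^sup>2 * a \<le> t * d + t\<^sup>2 * \<bar>a\<bar>" by linarith
  also have "\<dots> = - t\<^sup>2"
    unfolding \<open>d = - t * (\<bar>a\<bar> + 1)\<close> by (simp add: power2_eq_square ring_distribs)
  also have "\<dots> < 0" using \<open>t \<noteq> 0\<close> by simp
  finally show False using assms[of t] by simp
qed

locale bounded_functional_on_subspace =
  fixes S :: "'h::{real_inner,complete_space} set" and \<phi> :: "'h \<Rightarrow> real" and C :: real
  assumes subspace: "subspace S"
    and additive: "a \<in> S \<Longrightarrow> b \<in> S \<Longrightarrow> \<phi> (a + b) = \<phi> a + \<phi> b"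
    and homogeneous: "a \<in> S \<Longrightarrow> \<phi> (c *\<^sub>R a) = c * \<phi> a"
    and bounded: "a \<in> S \<Longrightarrow> \<bar>\<phi> a\<bar> \<le> C * norm a"
begin

definition energy :: "'h \<Rightarrow> real" where
  "energy f = (norm f)\<^sup>2 / 2 - \<phi> f"

lemma energy_lower_bound: "f \<in> S \<Longrightarrow> - C\<^sup>2 / 2 \<le> energy f"
  using bounded[of f] abs_le_D1[OF bounded[of f]] zero_le_power2[of "norm f - C"]
  unfolding energy_def by (simp add: power2_eq_square algebra_simps)

lemma energy_midpoint:
  assumes "a \<in> S" "b \<in> S"
  shows "(norm (a - b))\<^sup>2 / 4 = energy a + energy b - 2 * energy ((1/2) *\<^sub>R (a + b))"
proof -
  have "\<phi> ((1/2) *\<^sub>R (a + b)) = (\<phi> a + \<phi> b) / 2"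
    using assms subspace by (simp add: homogeneous additive subspace_add)
  then show ?thesis
    unfolding energy_def power2_norm_eq_inner
    by (simp add: inner_add_left inner_add_right inner_diff_left inner_diff_right inner_commute
        field_simps)
qed

lemma energy_shift:
  assumes "a \<in> S" "f \<in> S"
  shows "energy (a + t *\<^sub>R f) = energy a + t * (inner a f - \<phi> f) + t\<^sup>2 / 2 * (norm f)\<^sup>2"
proof -
  have "\<phi> (a + t *\<^sub>R f) = \<phi> a + t * \<phi> f"
    using assms subspace by (simp add: homogeneous additive subspace_mul)
  then show ?thesis
    unfolding energy_def power2_norm_eq_inner
    by (simp add: inner_add_left inner_add_right inner_commute power2_eq_square field_simps)
qed

lemma bdd_below_energy: "bdd_below (energy ` S)"
  by (rule bdd_belowI2[where m = "- C\<^sup>2 / 2"]) (rule energy_lower_bound)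

lemma Inf_energy_le: "f \<in> S \<Longrightarrow> Inf (energy ` S) \<le> energy f"
  by (rule cInf_lower) (simp_all add: bdd_below_energy)

lemma minimizing_sequence_exists:
  "\<exists>F. (\<forall>n. F n \<in> S) \<and> (\<lambda>n. energy (F n)) \<longlonglongrightarrow> Inf (energy ` S)"
proof -
  have "energy 0 \<in> energy ` S" using subspace_0[OF subspace] by (rule imageI)
  then have "energy ` S \<noteq> {}" by blast
  then have "Inf (energy ` S) \<in> closure (energy ` S)"
    by (rule closure_contains_Inf[OF _ bdd_below_energy])
  then obtain y where y: "\<forall>n. y n \<in> energy ` S" "y \<longlonglongrightarrow> Inf (energy ` S)"
    unfolding closure_sequential by blast
  from y(1) have "\<forall>n. \<exists>f. f \<in> S \<and> y n = energy f" by blast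
  then obtain F where "\<forall>n. F n \<in> S \<and> y n = energy (F n)" by (rule choice[THEN exE])
  moreover from this have "(\<lambda>n. energy (F n)) = y" by auto
  ultimately show ?thesis using y(2) by auto
qed

lemma minimizing_sequence_Cauchy:
  assumes F: "\<And>n. F n \<in> S" and lim: "(\<lambda>n. energy (F n)) \<longlonglongrightarrow> Inf (energy ` S)"
  shows "Cauchy F"
proof (rule metric_CauchyI)
  fix e :: real
  assume "0 < e"
  let ?m = "Inf (energy ` S)"
  from lim have "\<forall>\<^sub>F n in sequentially. energy (F n) < ?m + e\<^sup>2 / 8"
    by (rule order_tendstoD) (use \<open>0 < e\<close> in simp)
  then obtain N where N: "\<And>n. n \<ge> N \<Longrightarrow> energy (F n) < ?m + e\<^sup>2 / 8"
    unfolding eventually_sequentially by blast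
  have "dist (F i) (F j) < e" if "i \<ge> N" "j \<ge> N" for i j
  proof -
    have "?m \<le> energy ((1/2) *\<^sub>R (F i + F j))"
      using F subspace by (intro Inf_energy_le subspace_mul subspace_add) auto
    then have "(norm (F i - F j))\<^sup>2 < e\<^sup>2"
      using energy_midpoint[OF F F, of i j] N[OF \<open>i \<ge> N\<close>] N[OF \<open>j \<ge> N\<close>] by linarith
    then show ?thesis using \<open>0 < e\<close> by (simp add: dist_norm power_less_imp_less_base)
  qed
  then show "\<exists>N. \<forall>i\<ge>N. \<forall>j\<ge>N. dist (F i) (F j) < e" by blast
qed

lemma minimizing_limit_represents:
  assumes F: "\<And>n. F n \<in> S" and lim: "(\<lambda>n. energy (F n)) \<longlonglongrightarrow> Inf (energy ` S)"
    and "F \<longlonglongrightarrow> g" and "f \<in> S"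
  shows "inner g f = \<phi> f"
proof -
  let ?m = "Inf (energy ` S)"
  have "0 \<le> t * (inner g f - \<phi> f) + t\<^sup>2 * ((norm f)\<^sup>2 / 2)" for t
  proof -
    have "(\<lambda>n. energy (F n + t *\<^sub>R f))
        \<longlonglongrightarrow> ?m + t * (inner g f - \<phi> f) + t\<^sup>2 / 2 * (norm f)\<^sup>2"
      unfolding energy_shift[OF F \<open>f \<in> S\<close>] by (intro tendsto_intros lim \<open>F \<longlonglongrightarrow> g\<close>)
    moreover have "?m \<le> energy (F n + t *\<^sub>R f)" for n
      using F \<open>f \<in> S\<close> subspace by (intro Inf_energy_le subspace_add subspace_mul)
    ultimately have "?m \<le> ?m + t * (inner g f - \<phi> f) + t\<^sup>2 / 2 * (norm f)\<^sup>2"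
      by (intro LIMSEQ_le_const) auto
    then show ?thesis by simp
  qed
  then show ?thesis using quadratic_nonneg_imp_linear_coeff_zero by fastforce
qed

lemma representer_exists:
  assumes "0 \<le> C"
  shows "\<exists>g. (\<forall>f\<in>S. inner g f = \<phi> f) \<and> norm g \<le> C"
proof -
  obtain F where F: "\<And>n. F n \<in> S" and lim: "(\<lambda>n. energy (F n)) \<longlonglongrightarrow> Inf (energy ` S)"
    using minimizing_sequence_exists by blast
  then obtain g where "F \<longlonglongrightarrow> g"
    using minimizing_sequence_Cauchy Cauchy_convergent_iff convergent_def by blast
  note represents = minimizing_limit_represents[OF F lim this]
  \<comment> \<open>\<open>g\<close> need not lie in \<open>S\<close>, so its norm is bounded through the approximants \<open>F n\<close>.\<close>
  have "(\<lambda>n. inner g (F n)) \<longlonglongrightarrow> inner g g" "(\<lambda>n. C * norm (F n)) \<longlonglongrightarrow> C * norm g"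
    using \<open>F \<longlonglongrightarrow> g\<close> by (auto intro!: tendsto_intros)
  moreover have "inner g (F n) \<le> C * norm (F n)" for n
    using represents[OF F] abs_le_D1[OF bounded[OF F]] by simp
  ultimately have "(norm g)\<^sup>2 \<le> C * norm g"
    unfolding power2_norm_eq_inner by (intro LIMSEQ_le) auto
  then have "norm g \<le> C"
    using \<open>0 \<le> C\<close> by (cases "norm g = 0") (auto simp: power2_eq_square)
  with represents show ?thesis by blast
qed

end

lemma weak_integral_exists:
  fixes q :: "'x \<Rightarrow> 'h::{real_inner,complete_space}"
  assumes w: "w \<in> borel_measurable M" and b: "integrable M b"
    and dominated: "\<And>x. x \<in> space M \<Longrightarrow> \<bar>w x\<bar> * norm (q x) \<le> b x"
  shows "\<exists>g. norm g \<le> (\<integral>x. b x \<partial>M) \<and>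
    (\<forall>f. (\<lambda>x. inner (q x) f) \<in> borel_measurable M \<longrightarrow> inner g f = (\<integral>x. w x * inner (q x) f \<partial>M))"
proof -
  define S where "S = {f. (\<lambda>x. inner (q x) f) \<in> borel_measurable M}"
  define \<phi> where "\<phi> f = (\<integral>x. w x * inner (q x) f \<partial>M)" for f
  have pointwise: "\<bar>w x * inner (q x) f\<bar> \<le> b x * norm f" if "x \<in> space M" for x f
  proof -
    have "\<bar>w x * inner (q x) f\<bar> \<le> \<bar>w x\<bar> * (norm (q x) * norm f)"
      by (simp add: abs_mult mult_left_mono Cauchy_Schwarz_ineq2)
    also have "\<dots> \<le> b x * norm f"
      using dominated[OF that] by (simp add: mult.assoc[symmetric] mult_right_mono)
    finally show ?thesis .
  qed
  have integrable: "integrable M (\<lambda>x. w x * inner (q x) f)" if "f \<in> S" for f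
  proof (rule Bochner_Integration.integrable_bound)
    show "integrable M (\<lambda>x. b x * norm f)" using b by simp
    show "(\<lambda>x. w x * inner (q x) f) \<in> borel_measurable M" using w that by (simp add: S_def)
    show "AE x in M. norm (w x * inner (q x) f) \<le> norm (b x * norm f)"
    proof (rule AE_I2)
      fix x assume "x \<in> space M"
      then show "norm (w x * inner (q x) f) \<le> norm (b x * norm f)"
        using pointwise abs_ge_self[of "b x * norm f"] unfolding real_norm_def by (meson order_trans)
    qed
  qed
  have "bounded_functional_on_subspace S \<phi> (\<integral>x. b x \<partial>M)"
  proof
    show "subspace S"
      by (auto simp: subspace_def S_def inner_add_right)
    show "\<phi> (f + f') = \<phi> f + \<phi> f'" if "f \<in> S" "f' \<in> S" for f f'
      using integrable[OF that(1)] integrable[OF that(2)]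
      by (simp add: \<phi>_def inner_add_right distrib_left)
    show "\<phi> (c *\<^sub>R f) = c * \<phi> f" for c f
      by (simp add: \<phi>_def mult.left_commute)
    show "\<bar>\<phi> f\<bar> \<le> (\<integral>x. b x \<partial>M) * norm f" if "f \<in> S" for f
    proof -
      have "\<bar>\<phi> f\<bar> \<le> (\<integral>x. \<bar>w x * inner (q x) f\<bar> \<partial>M)"
        unfolding \<phi>_def real_norm_def[symmetric] by (rule integral_norm_bound)
      also have "\<dots> \<le> (\<integral>x. b x * norm f \<partial>M)"
        using integrable[OF that] b pointwise by (intro integral_mono) auto
      finally show ?thesis by simp
    qed
  qed
  moreover have "0 \<le> b x" if "x \<in> space M" for x
    using dominated[OF that] mult_nonneg_nonneg[OF abs_ge_zero norm_ge_zero, of "w x" "q x"] by linarith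
  then have "0 \<le> (\<integral>x. b x \<partial>M)" by (intro integral_nonneg_AE AE_I2)
  ultimately obtain g where "\<forall>f\<in>S. inner g f = \<phi> f" "norm g \<le> (\<integral>x. b x \<partial>M)"
    using bounded_functional_on_subspace.representer_exists by blast
  then show ?thesis unfolding S_def \<phi>_def by blast
qed

lemma is_rkhs_reproducing:
  assumes "is_rkhs K emb"
  obtains k where "\<And>g z. emb g z = inner g (k z)"
proof -
  from assms have "\<forall>z. \<exists>kz. \<forall>g. emb g z = inner g kz" unfolding is_rkhs_def by blast
  then obtain k where "\<forall>z g. emb g z = inner g (k z)" by metis
  with that show thesis by blast
qed

lemma rkhs_norm_emb: "inj emb \<Longrightarrow> rkhs_norm emb (emb g) = norm g"
  by (simp add: rkhs_norm_def)

lemma rkhs_integral_norm_le: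
  assumes "is_rkhs K emb"
    and "\<forall>x\<in>space M. p x \<in> range emb"
    and "\<forall>z. (\<lambda>x. p x z) \<in> borel_measurable M"
    and "w \<in> borel_measurable M" and "integrable M b"
    and "\<And>x. x \<in> space M \<Longrightarrow> \<bar>w x\<bar> * rkhs_norm emb (p x) \<le> b x"
  shows "(\<lambda>z. \<integral>x. w x * p x z \<partial>M) \<in> range emb \<and>
    rkhs_norm emb (\<lambda>z. \<integral>x. w x * p x z \<partial>M) \<le> (\<integral>x. b x \<partial>M)"
proof -
  obtain k where k: "\<And>g z. emb g z = inner g (k z)"
    using is_rkhs_reproducing[OF assms(1)] by blast
  define q where "q x = inv emb (p x)" for x
  have p_q: "p x = emb (q x)" if "x \<in> space M" for x
    using assms(2) that by (simp add: q_def f_inv_into_f)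
  obtain g where norm_g: "norm g \<le> (\<integral>x. b x \<partial>M)"
    and g: "\<And>f. (\<lambda>x. inner (q x) f) \<in> borel_measurable M \<Longrightarrow>
      inner g f = (\<integral>x. w x * inner (q x) f \<partial>M)"
    using weak_integral_exists[of w M b q] assms(4-6) unfolding rkhs_norm_def q_def by blast
  have "emb g = (\<lambda>z. \<integral>x. w x * p x z \<partial>M)"
  proof
    fix z
    have "(\<lambda>x. inner (q x) (k z)) \<in> borel_measurable M"
      using assms(3) by (subst measurable_cong[where g = "\<lambda>x. p x z"]) (simp_all add: p_q k)
    then have "emb g z = (\<integral>x. w x * inner (q x) (k z) \<partial>M)"
      by (simp add: k g)
    also have "\<dots> = (\<integral>x. w x * p x z \<partial>M)"
      by (intro Bochner_Integration.integral_cong) (simp_all add: p_q k)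
    finally show "emb g z = (\<integral>x. w x * p x z \<partial>M)" .
  qed
  moreover have "inj emb" using assms(1) by (simp add: is_rkhs_def)
  ultimately show ?thesis using norm_g rkhs_norm_emb by (metis rangeI)
qed

theorem lemma1:
  fixes M :: "'x measure"
    and K :: "'z \<Rightarrow> 'z \<Rightarrow> real"
    and emb :: "'h::{real_inner,complete_space} \<Rightarrow> 'z \<Rightarrow> real"
    and E :: "'a::real_normed_vector \<Rightarrow> 'x \<Rightarrow> real"
    and hh :: 'a
    and p :: "'x \<Rightarrow> 'z \<Rightarrow> real"
    and \<kappa> :: "'x \<Rightarrow> real"
  assumes "is_rkhs K emb"
    and "is_normed_fun_class E"
    and "\<forall>x\<in>space M. p x \<in> range emb"
    and "\<forall>x\<in>space M. \<bar>E hh x\<bar> \<le> \<kappa> x * norm hh"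
    and "E hh \<in> borel_measurable M"
    and "\<forall>z. (\<lambda>x. p x z) \<in> borel_measurable M"
    and "integrable M (\<lambda>x. \<kappa> x * rkhs_norm emb (p x))"
  shows "(\<lambda>z. \<integral>x. E hh x * p x z \<partial>M) \<in> range emb \<and>
         rkhs_norm emb (\<lambda>z. \<integral>x. E hh x * p x z \<partial>M)
           \<le> (\<integral>x. \<kappa> x * rkhs_norm emb (p x) \<partial>M) * norm hh"
proof -
  \<comment> \<open>Only the single function \<open>E hh\<close> enters.\<close>
  have dominated: "\<bar>E hh x\<bar> * rkhs_norm emb (p x) \<le> \<kappa> x * rkhs_norm emb (p x) * norm hh"
    if "x \<in> space M" for x
  proof -
    have "\<bar>E hh x\<bar> * rkhs_norm emb (p x) \<le> \<kappa> x * norm hh * rkhs_norm emb (p x)"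
      using assms(4) that by (simp add: mult_right_mono rkhs_norm_def)
    then show ?thesis by (simp add: mult_ac)
  qed
  have "integrable M (\<lambda>x. \<kappa> x * rkhs_norm emb (p x) * norm hh)"
    using assms(7) by simp
  from rkhs_integral_norm_le[OF assms(1,3,6,5) this dominated] show ?thesis by simp
qed

end
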